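(* Let $\psi$ be a saturation with saturation level $\alpha>0$ and $u:[0,L]\to\mathbb{R}$ a given velocity. Fix $n$ and suppose $0\le\rho_i^n\le\alpha$ for all $i=1,\dots,M$. If $(\rho_i^{n+1})_{i=1}^M$ satisfies the implicit scheme $$\frac{\rho_i^{n+1}-\rho_i^n}{\Delta t}+\frac{F_{i+1/2}^{n+1}-F_{i-1/2}^{n+1}}{\Delta x}=0,\qquad F_{i+1/2}^{n+1}=\rho_i^{n+1}(\psi_{i+1}^{n+1})^+u_{i+1/2}^++\rho_{i+1}^{n+1}(\psi_i^{n+1})^+u_{i+1/2}^-,$$ with $\psi_i^{n}=\psi(\rho_i^{n})$, $u_{i+1/2}=u(x_{i+1/2})$, and no-flux boundary conditions $F_{1/2}^{n+1}=F_{M+1/2}^{n+1}=0$, then $0\le\rho_i^{n+1}\le\alpha$ for all $i$, for any $\Delta t>0$ and $\Delta x>0$ (unconditionally).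
   Context: A saturation is a continuous function $\psi:[0,\infty)\to\mathbb{R}$ that is non-increasing and for which there is $\alpha>0$ (the saturation level) with $\psi(\alpha)=0$ and $(\alpha-s)\psi(s)>0$ for $s\neq\alpha$. Discretisation of $(0,L)$: $\Delta x=L/M$, cells with centres $x_i=\Delta x(i-1/2)$ and interfaces $x_{i+1/2}$, $i=1,\dots,M$; time step $\Delta t$; $\rho_i^n$ denotes the value on cell $i$ at time $t^n=n\Delta t$. Here $a^+=\max\{a,0\}$ and $a^-=\min\{a,0\}$. (This is a scheme for $\partial_t\rho+\partial_x(\rho\psi(\rho)u(x))=0$.) *)

theory Defs
  imports "HOL-Analysis.Analysis"
begin

definition saturation :: "(real \<Rightarrow> real) \<Rightarrow> real \<Rightarrow> bool" where
  "saturation \<psi> \<alpha> \<longleftrightarrow>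
     continuous_on {0..} \<psi> \<and>
     (\<forall>s\<in>{0..}. \<forall>t\<in>{0..}. s \<le> t \<longrightarrow> \<psi> t \<le> \<psi> s) \<and>
     \<alpha> > 0 \<and> \<psi> \<alpha> = 0 \<and>
     (\<forall>s\<in>{0..}. s \<noteq> \<alpha> \<longrightarrow> (\<alpha> - s) * \<psi> s > 0)"

definition pos_part :: "real \<Rightarrow> real" where "pos_part a = max a 0"
definition neg_part :: "real \<Rightarrow> real" where "neg_part a = min a 0"

text \<open>Numerical flux F at interface x_(i+1/2) = dx * i, for i = 0..M, with cells 1..M;
  no-flux boundary: F at i = 0 and i = M vanishes.\<close>
definition num_flux ::
  "(real \<Rightarrow> real) \<Rightarrow> (real \<Rightarrow> real) \<Rightarrow> real \<Rightarrow> nat \<Rightarrow> (nat \<Rightarrow> real) \<Rightarrow> nat \<Rightarrow> real" where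
  "num_flux \<psi> u dx M \<rho> i =
     (if i = 0 \<or> M \<le> i then 0
      else \<rho> i * pos_part (\<psi> (\<rho> (i + 1))) * pos_part (u (dx * real i))
         + \<rho> (i + 1) * pos_part (\<psi> (\<rho> i)) * neg_part (u (dx * real i)))"

end

theory Submission
  imports Defs
begin

text \<open>Let S be the set of cells where the new density is negative. Summing the scheme over S,
  the change of mass in S is the net flux through the boundary of S. The upwind flux across an
  interface combines the two neighbouring densities with coefficients of fixed sign, so at the
  boundary of S it points into S and the mass in S cannot decrease; yet it strictly decreased in
  every cell of S, so S is empty. For the cells above the saturation level the argument is
  mirrored: the flux entering a cell carries the positive part of psi at that cell, which
  vanishes above the saturation level, so mass can only leave S, although it strictly increased
  there. No step involves the sizes of dt and dx.\<close>

lemma saturation_level_pos: "saturation \<psi> \<alpha> \<Longrightarrow> 0 < \<alpha>"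
  by (simp add: saturation_def)

lemma saturation_neg_above:
  assumes "saturation \<psi> \<alpha>" and "\<alpha> < s"
  shows "\<psi> s < 0"
proof -
  have "(\<alpha> - s) * \<psi> s > 0"
    using assms saturation_level_pos[OF assms(1)] unfolding saturation_def by auto
  then show ?thesis
    using assms(2) by (simp add: zero_less_mult_iff)
qed

lemma num_flux_upwind_form:
  assumes "0 < j" "j < M"
  obtains a b where "num_flux \<psi> u dx M \<rho> j = \<rho> j * a + \<rho> (j + 1) * b"
    and "0 \<le> a" "b \<le> 0"
    and "\<psi> (\<rho> (j + 1)) \<le> 0 \<Longrightarrow> a = 0" "\<psi> (\<rho> j) \<le> 0 \<Longrightarrow> b = 0"
proof
  show "num_flux \<psi> u dx M \<rho> j =
      \<rho> j * (pos_part (\<psi> (\<rho> (j + 1))) * pos_part (u (dx * real j)))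
    + \<rho> (j + 1) * (pos_part (\<psi> (\<rho> j)) * neg_part (u (dx * real j)))"
    using assms by (simp add: num_flux_def mult.assoc)
qed (auto simp: pos_part_def neg_part_def mult_nonneg_nonpos)

lemma num_flux_boundary: "num_flux \<psi> u dx M \<rho> 0 = 0" "num_flux \<psi> u dx M \<rho> M = 0"
  by (simp_all add: num_flux_def)

lemma num_flux_nonpos:
  assumes "0 < j" "j < M" "0 \<le> \<rho> (j + 1)" "\<rho> j \<le> 0 \<or> \<psi> (\<rho> (j + 1)) \<le> 0"
  shows "num_flux \<psi> u dx M \<rho> j \<le> 0"
proof -
  obtain a b where F: "num_flux \<psi> u dx M \<rho> j = \<rho> j * a + \<rho> (j + 1) * b"
    and "0 \<le> a" "b \<le> 0" "\<psi> (\<rho> (j + 1)) \<le> 0 \<Longrightarrow> a = 0"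
    using num_flux_upwind_form[OF assms(1,2)] by metis
  then have "\<rho> j * a \<le> 0" "\<rho> (j + 1) * b \<le> 0"
    using assms(3,4) by (auto simp: mult_nonpos_nonneg mult_nonneg_nonpos)
  then show ?thesis
    using F by linarith
qed

lemma num_flux_nonneg:
  assumes "0 < j" "j < M" "0 \<le> \<rho> j" "\<rho> (j + 1) \<le> 0 \<or> \<psi> (\<rho> j) \<le> 0"
  shows "0 \<le> num_flux \<psi> u dx M \<rho> j"
proof -
  obtain a b where F: "num_flux \<psi> u dx M \<rho> j = \<rho> j * a + \<rho> (j + 1) * b"
    and "0 \<le> a" "b \<le> 0" "\<psi> (\<rho> j) \<le> 0 \<Longrightarrow> b = 0"
    using num_flux_upwind_form[OF assms(1,2)] by metis
  then have "0 \<le> \<rho> j * a" "0 \<le> \<rho> (j + 1) * b"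
    using assms(3,4) by (auto simp: mult_nonpos_nonpos)
  then show ?thesis
    using F by linarith
qed

lemma sum_mult_diff_by_parts:
  fixes c F :: "nat \<Rightarrow> 'a::comm_ring"
  assumes "F 0 = 0"
  shows "(\<Sum>i=1..M. c i * (F i - F (i - 1)))
       = (\<Sum>j=1..M. (c j - c (j + 1)) * F j) + c (M + 1) * F M"
  by (induction M) (simp_all add: assms algebra_simps)

lemma region_mass_balance:
  fixes r rn F :: "nat \<Rightarrow> real"
  assumes "dt \<noteq> 0" "dx \<noteq> 0" "F 0 = 0" "F M = 0"
    and scheme: "\<forall>i\<in>{1..M}. (r i - rn i) / dt + (F i - F (i - 1)) / dx = 0"
    and "S \<subseteq> {1..M}"
  shows "(\<Sum>i\<in>S. r i - rn i)
       = dt / dx * (\<Sum>j=1..M. (indicator S (j + 1) - indicator S j) * F j)"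
proof -
  have step: "r i - rn i = - (dt / dx) * (F i - F (i - 1))" if "i \<in> {1..M}" for i
    using scheme that assms(1,2) by (simp add: field_simps)
  have "{1..M} \<inter> S = S"
    using assms(6) by blast
  then have "(\<Sum>i\<in>S. r i - rn i) = (\<Sum>i=1..M. indicator S i * (r i - rn i))"
    using Indicator_Function.sum_indicator_mult[OF finite_atLeastAtMost, of S "\<lambda>i. r i - rn i"]
    by (simp only:)
  also have "\<dots> = (\<Sum>i=1..M. - (dt / dx) * (indicator S i * (F i - F (i - 1))))"
    by (rule sum.cong) (simp_all add: step mult.left_commute)
  also have "\<dots> = - (dt / dx) * (\<Sum>i=1..M. indicator S i * (F i - F (i - 1)))"
    by (simp only: sum_distrib_left)
  also have "\<dots> = - (dt / dx) * (\<Sum>j=1..M. (indicator S j - indicator S (j + 1)) * F j)"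
    using sum_mult_diff_by_parts[of F "indicator S" M] assms(3,4) by simp
  finally show ?thesis
    by (simp add: sum_subtractf algebra_simps)
qed

lemma conservative_step_uminus:
  fixes r rn F :: "nat \<Rightarrow> real"
  assumes "\<forall>i\<in>I. (r i - rn i) / dt + (F i - F (i - 1)) / dx = 0"
  shows "\<forall>i\<in>I. ((- r) i - (- rn) i) / dt + ((- F) i - (- F) (i - 1)) / dx = 0"
proof
  fix i assume "i \<in> I"
  then have "(r i - rn i) / dt + (F i - F (i - 1)) / dx = 0"
    using assms by blast
  then show "((- r) i - (- rn) i) / dt + ((- F) i - (- F) (i - 1)) / dx = 0"
    by (simp add: diff_divide_distrib)
qed

lemma region_empty_without_outflow:
  fixes r rn F :: "nat \<Rightarrow> real"
  assumes "dt > 0" "dx > 0" "F 0 = 0" "F M = 0"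
    and scheme: "\<forall>i\<in>{1..M}. (r i - rn i) / dt + (F i - F (i - 1)) / dx = 0"
    and S: "S \<subseteq> {1..M}"
    and inflow_left: "\<And>j. 0 < j \<Longrightarrow> j < M \<Longrightarrow> j \<notin> S \<Longrightarrow> j + 1 \<in> S \<Longrightarrow> 0 \<le> F j"
    and inflow_right: "\<And>j. 0 < j \<Longrightarrow> j < M \<Longrightarrow> j \<in> S \<Longrightarrow> j + 1 \<notin> S \<Longrightarrow> F j \<le> 0"
    and decrease: "\<And>i. i \<in> S \<Longrightarrow> r i < rn i"
  shows "S = {}"
proof (rule ccontr)
  assume "S \<noteq> {}"
  have "finite S"
    using S finite_subset by blast
  have "(\<Sum>i\<in>S. r i - rn i) < 0"
    using sum_strict_mono[OF \<open>finite S\<close> \<open>S \<noteq> {}\<close> decrease] by (simp add: sum_subtractf)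
  moreover have "0 \<le> (\<Sum>j=1..M. (indicator S (j + 1) - indicator S j) * F j)"
  proof (rule sum_nonneg)
    fix j assume j: "j \<in> {1..M}"
    show "0 \<le> (indicator S (j + 1) - indicator S j) * F j"
    proof (cases "j = M")
      case False
      then show ?thesis
        using j inflow_left[of j] inflow_right[of j] by (auto simp: indicator_def)
    qed (simp add: assms(4))
  qed
  then have "0 \<le> (\<Sum>i\<in>S. r i - rn i)"
    using region_mass_balance[OF _ _ assms(3,4) scheme S] assms(1,2) by simp
  ultimately show False
    by linarith
qed

lemma implicit_step_nonneg:
  fixes r rn :: "nat \<Rightarrow> real"
  assumes "dt > 0" "dx > 0"
    and nonneg: "\<forall>i\<in>{1..M}. 0 \<le> rn i"
    and scheme: "\<forall>i\<in>{1..M}. (r i - rn i) / dt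
        + (num_flux \<psi> u dx M r i - num_flux \<psi> u dx M r (i - 1)) / dx = 0"
  shows "\<forall>i\<in>{1..M}. 0 \<le> r i"
proof -
  have "{i\<in>{1..M}. r i < 0} = {}"
  proof (rule region_empty_without_outflow[OF assms(1,2) num_flux_boundary scheme])
    show "r i < rn i" if "i \<in> {i\<in>{1..M}. r i < 0}" for i
      using that nonneg by fastforce
  qed (auto intro!: num_flux_nonneg num_flux_nonpos)
  then show ?thesis
    by (auto simp: not_less)
qed

lemma implicit_step_le_saturation:
  fixes r rn :: "nat \<Rightarrow> real"
  assumes sat: "saturation \<psi> \<alpha>" and "dt > 0" "dx > 0"
    and nonneg: "\<forall>i\<in>{1..M}. 0 \<le> r i"
    and bounded: "\<forall>i\<in>{1..M}. rn i \<le> \<alpha>"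
    and scheme: "\<forall>i\<in>{1..M}. (r i - rn i) / dt
        + (num_flux \<psi> u dx M r i - num_flux \<psi> u dx M r (i - 1)) / dx = 0"
  shows "\<forall>i\<in>{1..M}. r i \<le> \<alpha>"
proof -
  have "{i\<in>{1..M}. \<alpha> < r i} = {}"
  proof (rule region_empty_without_outflow[OF assms(2,3) _ _ conservative_step_uminus[OF scheme]])
    show "(- num_flux \<psi> u dx M r) 0 = 0" "(- num_flux \<psi> u dx M r) M = 0"
      by (simp_all add: num_flux_boundary)
    show "(- r) i < (- rn) i" if "i \<in> {i\<in>{1..M}. \<alpha> < r i}" for i
      using that bounded by fastforce
  qed (use nonneg in \<open>auto simp: less_imp_le saturation_neg_above[OF sat]
      intro!: num_flux_nonneg num_flux_nonpos\<close>)
  then show ?thesis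
    by (auto simp: not_less)
qed

theorem proposition2p6:
  fixes \<psi> u :: "real \<Rightarrow> real" and \<alpha> L dt :: real and M :: nat
    and rho_n rho_n1 :: "nat \<Rightarrow> real"
  assumes sat: "saturation \<psi> \<alpha>"
    and L: "L > 0" and M: "M \<ge> 1" and dt: "dt > 0"
    and init: "\<forall>i\<in>{1..M}. 0 \<le> rho_n i \<and> rho_n i \<le> \<alpha>"
    and scheme: "\<forall>i\<in>{1..M}.
        (rho_n1 i - rho_n i) / dt
        + (num_flux \<psi> u (L / real M) M rho_n1 i - num_flux \<psi> u (L / real M) M rho_n1 (i - 1))
          / (L / real M) = 0"
  shows "\<forall>i\<in>{1..M}. 0 \<le> rho_n1 i \<and> rho_n1 i \<le> \<alpha>"
proof -
  have dx: "L / real M > 0"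
    using L M by simp
  have "\<forall>i\<in>{1..M}. 0 \<le> rho_n1 i"
    using implicit_step_nonneg[OF dt dx _ scheme] init by blast
  moreover have "\<forall>i\<in>{1..M}. rho_n1 i \<le> \<alpha>"
    using implicit_step_le_saturation[OF sat dt dx calculation _ scheme] init by blast
  ultimately show ?thesis
    by blast
qed

end
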